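(* Let $M$ be a matroid of rank $r$ on the ground set $E=\{1,\dots,n\}$ and let $(E_1,E_2)$ be a good partition of $E$ with associated integers $r_1,r_2,a_1,a_2$. Let $M_1,M_2$ be the matroids on $E$ with bases $$\mathcal{B}(M_1)=\{B\in\mathcal{B}(M): |B\cap E_1|\le r_1-a_1\},\qquad \mathcal{B}(M_2)=\{B\in\mathcal{B}(M): |B\cap E_2|\le r_2-a_2\}.$$ Then $P(M)=P(M_1)\cup P(M_2)$ is a nontrivial hyperplane split of $P(M)$.
   Context: For a matroid $N$ on $E=\{1,\dots,n\}$ with set of bases $\mathcal{B}(N)$, the matroid base polytope is $P(N)=\mathrm{conv}\{\sum_{i\in B}e_i : B\in\mathcal{B}(N)\}\subset\mathbb{R}^n$, where $e_i$ is the $i$-th standard basis vector. A hyperplane split of $P(M)$ is an expression $P(M)=P(M_1)\cup P(M_2)$ with $M_1,M_2$ matroids on $E$ such that $P(M_1)\cap P(M_2)$ is a face of both $P(M_1)$ and $P(M_2)$; it is nontrivial if $P(M_1)\neq P(M)$ and $P(M_2)\neq P(M)$. For $A\subseteq E$, $M|_A$ denotes the restriction of $M$ to $A$, and $\mathcal{I}(N)$ the independent sets of $N$. A partition $(E_1,E_2)$ of $E$ with $r_i$ the rank of $M|_{E_i}$ and $r_i>1$ ($i=1,2$) is a good partition if there exist integers $0<a_1<r_1$, $0<a_2<r_2$ such that (P1) $r_1+r_2=r+a_1+a_2$ and (P2) for every $X\in\mathcal{I}(M|_{E_1})$ with $|X|\le r_1-a_1$ and every $Y\in\mathcal{I}(M|_{E_2})$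 with $|Y|\le r_2-a_2$, $X\cup Y\in\mathcal{I}(M)$. (These $\mathcal{B}(M_1),\mathcal{B}(M_2)$ are indeed collections of bases of matroids.) *)

theory Defs
  imports "HOL-Analysis.Analysis"
begin

text \<open>Matroids on the finite ground set E = UNIV of a finite type 'a, given by their
  collection of bases (base exchange axiom).\<close>
definition matroid_bases :: "('a::finite) set set \<Rightarrow> bool" where
  "matroid_bases \<B> \<longleftrightarrow> \<B> \<noteq> {} \<and>
     (\<forall>B1\<in>\<B>. \<forall>B2\<in>\<B>. \<forall>x\<in>B1 - B2. \<exists>y\<in>B2 - B1. insert y (B1 - {x}) \<in> \<B>)"

definition indep :: "('a::finite) set set \<Rightarrow> 'a set \<Rightarrow> bool" where
  "indep \<B> X \<longleftrightarrow> (\<exists>B\<in>\<B>. X \<subseteq> B)"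

definition rank_of :: "('a::finite) set set \<Rightarrow> 'a set \<Rightarrow> nat" where
  "rank_of \<B> A = Max {card X | X. indep \<B> X \<and> X \<subseteq> A}"

definition matroid_rank :: "('a::finite) set set \<Rightarrow> nat" where
  "matroid_rank \<B> = rank_of \<B> UNIV"

definition incidence_vector :: "('a::finite) set \<Rightarrow> real^'a" where
  "incidence_vector B = (\<chi> i. if i \<in> B then 1 else 0)"

definition base_polytope :: "('a::finite) set set \<Rightarrow> (real^'a) set" where
  "base_polytope \<B> = convex hull (incidence_vector ` \<B>)"

definition hyperplane_split :: "('a::finite) set set \<Rightarrow> 'a set set \<Rightarrow> 'a set set \<Rightarrow> bool" where
  "hyperplane_split \<B> \<B>1 \<B>2 \<longleftrightarrow> matroid_bases \<B>1 \<and> matroid_bases \<B>2 \<and>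
     base_polytope \<B> = base_polytope \<B>1 \<union> base_polytope \<B>2 \<and>
     (base_polytope \<B>1 \<inter> base_polytope \<B>2) face_of base_polytope \<B>1 \<and>
     (base_polytope \<B>1 \<inter> base_polytope \<B>2) face_of base_polytope \<B>2"

definition nontrivial_hyperplane_split :: "('a::finite) set set \<Rightarrow> 'a set set \<Rightarrow> 'a set set \<Rightarrow> bool" where
  "nontrivial_hyperplane_split \<B> \<B>1 \<B>2 \<longleftrightarrow> hyperplane_split \<B> \<B>1 \<B>2 \<and>
     base_polytope \<B>1 \<noteq> base_polytope \<B> \<and> base_polytope \<B>2 \<noteq> base_polytope \<B>"

definition good_partition :: "('a::finite) set set \<Rightarrow> 'a set \<Rightarrow> 'a set \<Rightarrow> nat \<Rightarrow> nat \<Rightarrow> bool" where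
  "good_partition \<B> E1 E2 a1 a2 \<longleftrightarrow>
     E1 \<inter> E2 = {} \<and> E1 \<union> E2 = UNIV \<and>
     rank_of \<B> E1 > 1 \<and> rank_of \<B> E2 > 1 \<and>
     0 < a1 \<and> a1 < rank_of \<B> E1 \<and> 0 < a2 \<and> a2 < rank_of \<B> E2 \<and>
     rank_of \<B> E1 + rank_of \<B> E2 = matroid_rank \<B> + a1 + a2 \<and>
     (\<forall>X Y. indep \<B> X \<and> X \<subseteq> E1 \<and> card X \<le> rank_of \<B> E1 - a1 \<and>
            indep \<B> Y \<and> Y \<subseteq> E2 \<and> card Y \<le> rank_of \<B> E2 - a2 \<longrightarrow> indep \<B> (X \<union> Y))"

end

theory Submission
  imports Defs
begin

(* Let s = r1 - a1 and k = r2 - a2, so s + k = r by (P1).  Since every base B satisfies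
   |B \<inter> E1| + |B \<inter> E2| = r, the bases of M1 are exactly the bases with |B \<inter> E2| >= k and the
   bases of M2 those with |B \<inter> E2| <= k: they are the vertices of P(M) on the two sides of the
   hyperplane H = {x. x(E2) = k}.  For a weight c the least weight of an independent j-subset of a
   set E is a convex function of j, hence has a supporting line at every level below rank(E).
   A purely geometric lemma shows that if H \<inter> conv V is spanned by the points of V on H, then
   conv V is the union of the hulls of the points on the two sides of H, meeting in a common face.
   Finally, for the levels s, k: both families satisfy base exchange (using (P2)); combining the
   supporting lines on E1 and on E2 with a separating hyperplane shows that H \<inter> P(M) is spanned
   by the bases on H; and the split is nontrivial because some base meets E_i in r_i elements. *)

lemma base_exchange:
  assumes "matroid_bases \<B>" "B1 \<in> \<B>" "B2 \<in> \<B>" "x \<in> B1 - B2"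
  obtains y where "y \<in> B2 - B1" "insert y (B1 - {x}) \<in> \<B>"
  using assms unfolding matroid_bases_def by meson

lemma card_swap:
  fixes B :: "'a::finite set"
  assumes "x \<in> B" "y \<notin> B"
  shows "card (insert y (B - {x})) = card B"
proof -
  have "card B > 0" using assms(1) by (auto simp: card_gt_0_iff)
  then show ?thesis using assms by simp
qed

(* All bases have the same size: exchange steps shrink the difference B1 - B2 without
   changing the cardinality of B1. *)
lemma bases_card_eq:
  assumes M: "matroid_bases \<B>" and "B1 \<in> \<B>" "B2 \<in> \<B>"
  shows "card B1 = card B2"
  using assms(2,3)
proof (induction n \<equiv> "card (B1 - B2)" arbitrary: B1)
  case 0
  then have "B1 \<subseteq> B2" by auto
  moreover have "B2 \<subseteq> B1"
  proof
    fix x assume "x \<in> B2"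
    show "x \<in> B1"
    proof (rule ccontr)
      assume "x \<notin> B1"
      then obtain y where "y \<in> B1 - B2"
        using base_exchange[OF M \<open>B2 \<in> \<B>\<close> \<open>B1 \<in> \<B>\<close>] \<open>x \<in> B2\<close> by blast
      then show False using \<open>B1 \<subseteq> B2\<close> by auto
    qed
  qed
  ultimately show ?case by auto
next
  case (Suc n)
  then obtain x where x: "x \<in> B1 - B2" by (metis card.empty ex_in_conv nat.distinct(1))
  then obtain y where y: "y \<in> B2 - B1" "insert y (B1 - {x}) \<in> \<B>"
    using base_exchange[OF M Suc.prems] by blast
  have "insert y (B1 - {x}) - B2 = (B1 - B2) - {x}" using x y by auto
  then have "card (insert y (B1 - {x}) - B2) = n" using Suc.hyps(2) x by simp
  then have "card (insert y (B1 - {x})) = card B2" using Suc y by blast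
  then show ?case using card_swap[of x B1 y] x y by simp
qed

lemma basis_extend:
  assumes M: "matroid_bases \<B>" and "B0 \<in> \<B>" "I \<subseteq> B0" "B \<in> \<B>"
  shows "\<exists>B'\<in>\<B>. I \<subseteq> B' \<and> B' \<subseteq> I \<union> B"
  using assms(2,3)
proof (induction n \<equiv> "card (B0 - (I \<union> B))" arbitrary: B0)
  case 0
  then show ?case by auto
next
  case (Suc n)
  then obtain x where x: "x \<in> B0 - (I \<union> B)" by (metis card.empty ex_in_conv nat.distinct(1))
  then obtain y where y: "y \<in> B - B0" "insert y (B0 - {x}) \<in> \<B>"
    using base_exchange[OF M Suc.prems(1) assms(4)] by blast
  have "insert y (B0 - {x}) - (I \<union> B) = (B0 - (I \<union> B)) - {x}" using x y by auto
  then have "card (insert y (B0 - {x}) - (I \<union> B)) = n" using Suc.hyps(2) x by simp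
  moreover have "I \<subseteq> insert y (B0 - {x})" using x Suc.prems by auto
  ultimately show ?case using Suc.hyps(1) y by blast
qed

lemma indep_subset: "indep \<B> X \<Longrightarrow> Y \<subseteq> X \<Longrightarrow> indep \<B> Y"
  unfolding indep_def by blast

lemma base_indep: "B \<in> \<B> \<Longrightarrow> indep \<B> B"
  unfolding indep_def by blast

lemma indep_empty: "matroid_bases \<B> \<Longrightarrow> indep \<B> {}"
  unfolding indep_def matroid_bases_def by auto

lemma augment:
  assumes M: "matroid_bases \<B>" and I: "indep \<B> I" and J: "indep \<B> J" and c: "card I < card J"
  obtains y where "y \<in> J - I" "indep \<B> (insert y I)"
proof -
  obtain B where B: "B \<in> \<B>" "J \<subseteq> B" using J unfolding indep_def by auto
  obtain B0 where B0: "B0 \<in> \<B>" "I \<subseteq> B0" using I unfolding indep_def by auto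
  obtain B' where B': "B' \<in> \<B>" "I \<subseteq> B'" "B' \<subseteq> I \<union> B"
    using basis_extend[OF M B0 B(1)] by auto
  have "B' \<inter> (J - I) \<noteq> {}"
  proof
    assume "B' \<inter> (J - I) = {}"
    then have "B' \<subseteq> I \<union> (B - J)" using B' by auto
    then have "card B' \<le> card I + card (B - J)"
      by (metis card_Un_le card_mono finite order_trans)
    also have "card (B - J) = card B - card J" using B by (simp add: card_Diff_subset)
    finally have "card B' < card B" using c card_mono[of B J] B by simp
    then show False using bases_card_eq[OF M B'(1) B(1)] by simp
  qed
  then obtain y where "y \<in> B' \<inter> (J - I)" by auto
  then show ?thesis using that B' unfolding indep_def by blast
qed

lemma rank_of_eq_Max: "rank_of \<B> A = Max (card ` {X. indep \<B> X \<and> X \<subseteq> A})"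
  unfolding rank_of_def by (rule arg_cong[where f = Max]) blast

lemma rank_of_upper:
  assumes "indep \<B> Y" "Y \<subseteq> A"
  shows "card Y \<le> rank_of \<B> A"
  unfolding rank_of_eq_Max using assms by (intro Max_ge) auto

lemma rank_of_attained:
  assumes "matroid_bases \<B>"
  obtains X where "indep \<B> X" "X \<subseteq> A" "card X = rank_of \<B> A"
proof -
  have "rank_of \<B> A \<in> card ` {X. indep \<B> X \<and> X \<subseteq> A}"
    unfolding rank_of_eq_Max using indep_empty[OF assms] by (intro Max_in) auto
  then show ?thesis using that by auto
qed

lemma indep_of_card:
  assumes M: "matroid_bases \<B>" and "j \<le> rank_of \<B> A"
  obtains X where "indep \<B> X" "X \<subseteq> A" "card X = j"
proof -
  obtain X where X: "indep \<B> X" "X \<subseteq> A" "card X = rank_of \<B> A"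
    using rank_of_attained[OF M] by blast
  obtain Y where "Y \<subseteq> X" "card Y = j" using obtain_subset_with_card_n[of j X] X assms(2) by auto
  then show ?thesis using that X indep_subset by blast
qed

lemma base_card:
  assumes M: "matroid_bases \<B>" and B: "B \<in> \<B>"
  shows "card B = matroid_rank \<B>"
proof -
  obtain X where X: "indep \<B> X" "card X = matroid_rank \<B>"
    using rank_of_attained[OF M, of UNIV] unfolding matroid_rank_def by blast
  then obtain B' where "B' \<in> \<B>" "X \<subseteq> B'" unfolding indep_def by blast
  then have "card X \<le> card B" using bases_card_eq[OF M _ B] card_mono[of B' X] by simp
  moreover have "card B \<le> matroid_rank \<B>"
    using rank_of_upper[OF base_indep[OF B]] unfolding matroid_rank_def by simp
  ultimately show ?thesis using X by simp
qed

lemma indep_full_card_base: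
  assumes M: "matroid_bases \<B>" and "indep \<B> X" "card X = matroid_rank \<B>"
  shows "X \<in> \<B>"
proof -
  obtain B where "B \<in> \<B>" "X \<subseteq> B" using assms(2) unfolding indep_def by blast
  then show ?thesis using assms(3) base_card[OF M] card_subset_eq[of B X] by simp
qed

lemma base_attaining_rank:
  assumes M: "matroid_bases \<B>"
  obtains B where "B \<in> \<B>" "rank_of \<B> E \<le> card (B \<inter> E)"
proof -
  obtain X where X: "indep \<B> X" "X \<subseteq> E" "card X = rank_of \<B> E"
    using rank_of_attained[OF M] by blast
  then obtain B where "B \<in> \<B>" "X \<subseteq> B" unfolding indep_def by blast
  moreover have "card X \<le> card (B \<inter> E)" using X calculation by (intro card_mono) auto
  ultimately show ?thesis using that X by simp
qed

(* For a weight c, the least weight of an independent j-subset of E.  As a function of j it is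
   convex, which is the discrete fact behind the description of the slice of P(M) below. *)
definition min_weight :: "('a::finite) set set \<Rightarrow> ('a \<Rightarrow> real) \<Rightarrow> 'a set \<Rightarrow> nat \<Rightarrow> real" where
  "min_weight \<B> c E j = Min (sum c ` {Y. indep \<B> Y \<and> Y \<subseteq> E \<and> card Y = j})"

lemma min_weight_le:
  assumes "indep \<B> Y" "Y \<subseteq> E"
  shows "min_weight \<B> c E (card Y) \<le> sum c Y"
  unfolding min_weight_def using assms by (intro Min_le) auto

lemma min_weight_attained:
  assumes M: "matroid_bases \<B>" and "j \<le> rank_of \<B> E"
  obtains Y where "indep \<B> Y" "Y \<subseteq> E" "card Y = j" "sum c Y = min_weight \<B> c E j"
proof -
  obtain X where "indep \<B> X" "X \<subseteq> E" "card X = j" using indep_of_card[OF assms] .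
  then have "min_weight \<B> c E j \<in> sum c ` {Y. indep \<B> Y \<and> Y \<subseteq> E \<and> card Y = j}"
    unfolding min_weight_def by (intro Min_in) auto
  then show ?thesis using that by auto
qed

(* Convexity: augmenting a minimiser of size j from one of size j + 2 gives two sets of size
   j + 1 whose weights add up to the two minima. *)
lemma min_weight_convex:
  assumes M: "matroid_bases \<B>" and j: "j + 2 \<le> rank_of \<B> E"
  shows "2 * min_weight \<B> c E (j + 1) \<le> min_weight \<B> c E j + min_weight \<B> c E (j + 2)"
proof -
  obtain I where I: "indep \<B> I" "I \<subseteq> E" "card I = j" "sum c I = min_weight \<B> c E j"
    using min_weight_attained[OF M, of j E c] j by auto
  obtain J where J: "indep \<B> J" "J \<subseteq> E" "card J = j + 2" "sum c J = min_weight \<B> c E (j + 2)"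
    using min_weight_attained[OF M j] by blast
  obtain y where y: "y \<in> J - I" "indep \<B> (insert y I)"
    using augment[OF M I(1) J(1)] I(3) J(3) by auto
  have "min_weight \<B> c E (card (insert y I)) \<le> sum c (insert y I)"
    using y I J(2) by (intro min_weight_le) auto
  then have up: "min_weight \<B> c E (j + 1) \<le> c y + sum c I" using y I by simp
  have "min_weight \<B> c E (card (J - {y})) \<le> sum c (J - {y})"
    using y J by (intro min_weight_le indep_subset[OF J(1)]) auto
  then have down: "min_weight \<B> c E (j + 1) \<le> sum c J - c y"
    using y J by (simp add: sum_diff1)
  show ?thesis using up down I(4) J(4) by linarith
qed

lemma convex_increments_mono:
  fixes \<psi> :: "nat \<Rightarrow> real"
  assumes convex: "\<And>j. j + 2 \<le> R \<Longrightarrow> 2 * \<psi> (j + 1) \<le> \<psi> j + \<psi> (j + 2)"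
    and "i \<le> j" "j + 1 \<le> R"
  shows "\<psi> (i + 1) - \<psi> i \<le> \<psi> (j + 1) - \<psi> j"
  using assms(2,3)
proof (induction j rule: dec_induct)
  case base
  then show ?case by simp
next
  case (step n)
  then show ?case using convex[of n] by simp
qed

lemma convex_supporting_line:
  fixes \<psi> :: "nat \<Rightarrow> real"
  assumes convex: "\<And>j. j + 2 \<le> R \<Longrightarrow> 2 * \<psi> (j + 1) \<le> \<psi> j + \<psi> (j + 2)"
    and t: "t < R" and j: "j \<le> R"
  shows "\<psi> t + (\<psi> (t + 1) - \<psi> t) * (real j - real t) \<le> \<psi> j"
proof (cases "t \<le> j")
  case True
  then show ?thesis using j
  proof (induction j rule: dec_induct)
    case base
    then show ?case by simp
  next
    case (step n)
    have "\<psi> (t + 1) - \<psi> t \<le> \<psi> (n + 1) - \<psi> n"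
      using convex_increments_mono[OF convex] step by simp
    then show ?case using step by (simp add: algebra_simps)
  qed
next
  case False
  then have "j \<le> t" by simp
  then show ?thesis
  proof (induction j rule: inc_induct)
    case base
    then show ?case by simp
  next
    case (step n)
    have "\<psi> (n + 1) - \<psi> n \<le> \<psi> (t + 1) - \<psi> t"
      using convex_increments_mono[OF convex] step.hyps t by simp
    then show ?case using step.IH by (simp add: algebra_simps)
  qed
qed

lemma min_weight_supporting_line:
  assumes M: "matroid_bases \<B>" and t: "t < rank_of \<B> E"
  obtains X d where "indep \<B> X" "X \<subseteq> E" "card X = t"
    "\<And>Y. indep \<B> Y \<Longrightarrow> Y \<subseteq> E \<Longrightarrow> sum c X + d * (real (card Y) - real t) \<le> sum c Y"
proof -
  let ?\<psi> = "min_weight \<B> c E"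
  obtain X where X: "indep \<B> X" "X \<subseteq> E" "card X = t" "sum c X = ?\<psi> t"
    using min_weight_attained[OF M, of t E c] t by auto
  have "sum c X + (?\<psi> (t + 1) - ?\<psi> t) * (real (card Y) - real t) \<le> sum c Y"
    if "indep \<B> Y" "Y \<subseteq> E" for Y
  proof -
    have "?\<psi> t + (?\<psi> (t + 1) - ?\<psi> t) * (real (card Y) - real t) \<le> ?\<psi> (card Y)"
      using convex_supporting_line[of "rank_of \<B> E" ?\<psi>] min_weight_convex[OF M] t
        rank_of_upper[OF that] by blast
    then show ?thesis using min_weight_le[OF that, of c] X(4) by simp
  qed
  then show ?thesis using that X(1-3) by blast
qed

lemma hyperplane_crossing:
  fixes l w :: "'n::real_inner"
  assumes below: "inner a l < k" and above: "k \<le> inner a ((1 - v) *\<^sub>R l + v *\<^sub>R w)"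
    and v: "0 \<le> v" "v \<le> 1"
  obtains t where "0 \<le> t" "t \<le> 1" "inner a ((1 - t) *\<^sub>R l + t *\<^sub>R w) = k"
    "(1 - v) *\<^sub>R l + v *\<^sub>R w \<in> closed_segment ((1 - t) *\<^sub>R l + t *\<^sub>R w) w"
proof -
  define al aw where "al = inner a l" and "aw = inner a w"
  have rise: "k - al \<le> v * (aw - al)"
    using above by (simp add: al_def aw_def inner_add_right algebra_simps)
  then have gap: "al < aw"
    using below v unfolding al_def by (smt (verit) mult_nonneg_nonpos)
  define t where "t = (k - al) / (aw - al)"
  have t: "0 < t" "t \<le> v" using below rise gap unfolding t_def al_def by (auto simp: field_simps)
  define h where "h = (1 - t) *\<^sub>R l + t *\<^sub>R w"
  have "inner a h = al + t * (aw - al)"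
    unfolding h_def al_def aw_def by (simp add: inner_add_right algebra_simps)
  then have hk: "inner a h = k" using gap unfolding t_def by simp
  have "(1 - v) *\<^sub>R l + v *\<^sub>R w \<in> closed_segment h w"
  proof (cases "t = 1")
    case True
    then show ?thesis using t v by (simp add: h_def)
  next
    case False
    define u where "u = (v - t) / (1 - t)"
    have u: "0 \<le> u" "u \<le> 1" using t v False unfolding u_def by (auto simp: field_simps)
    have nz: "1 - t \<noteq> 0" using False by simp
    have one_minus_u: "1 - u = (1 - v) / (1 - t)" using nz unfolding u_def by (simp add: field_simps)
    have "(1 - u) * (1 - t) = 1 - v" using nz by (simp add: one_minus_u)
    moreover have "(1 - u) * t + u = v"
    proof -
      have "(1 - u) * t + u = (1 - v) / (1 - t) * t + (v - t) / (1 - t)"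
        unfolding one_minus_u by (simp add: u_def)
      also have "\<dots> = ((1 - v) * t + (v - t)) / (1 - t)"
        by (simp add: add_divide_distrib)
      also have "(1 - v) * t + (v - t) = v * (1 - t)" by (simp add: algebra_simps)
      finally show ?thesis using nz by simp
    qed
    moreover have "(1 - u) *\<^sub>R h + u *\<^sub>R w = ((1 - u) * (1 - t)) *\<^sub>R l + ((1 - u) * t + u) *\<^sub>R w"
      unfolding h_def by (simp add: algebra_simps)
    ultimately have "(1 - v) *\<^sub>R l + v *\<^sub>R w = (1 - u) *\<^sub>R h + u *\<^sub>R w" by simp
    then show ?thesis using u unfolding in_segment by blast
  qed
  then show ?thesis using that[of t] t v hk unfolding h_def by simp
qed

(* If the hyperplane section of conv V lies in the hull of the points of V above the hyperplane,
   then so does the whole upper half of conv V: a point above is a combination of a point below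
   and a point of that hull, and moving along this segment it is reached from the section. *)
lemma upper_half_of_hull:
  fixes V :: "'n::euclidean_space set"
  assumes slice: "convex hull V \<inter> {y. inner a y = k} \<subseteq> convex hull {v\<in>V. k \<le> inner a v}"
  shows "convex hull V \<inter> {y. k \<le> inner a y} \<subseteq> convex hull {v\<in>V. k \<le> inner a v}"
proof
  fix x assume x: "x \<in> convex hull V \<inter> {y. k \<le> inner a y}"
  let ?L = "{v\<in>V. inner a v < k}" and ?U = "{v\<in>V. k \<le> inner a v}"
  have L: "convex hull ?L \<subseteq> {y. inner a y < k}"
    by (rule hull_minimal) (auto simp: convex_halfspace_lt)
  show "x \<in> convex hull ?U"
  proof (cases "?L = {} \<or> ?U = {}")
    case True
    then have "V = ?U \<or> V = ?L" by auto
    then show ?thesis using x L by auto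
  next
    case False
    have "convex hull V \<subseteq> convex hull (convex hull ?L \<union> convex hull ?U)"
    proof (rule hull_mono, rule subsetI)
      fix v assume "v \<in> V"
      then show "v \<in> convex hull ?L \<union> convex hull ?U"
        using hull_subset[of ?L convex] hull_subset[of ?U convex] by (cases "k \<le> inner a v") auto
    qed
    then have "x \<in> {u *\<^sub>R l + v *\<^sub>R w | u v l w. 0 \<le> u \<and> 0 \<le> v \<and> u + v = 1 \<and>
                         l \<in> convex hull ?L \<and> w \<in> convex hull ?U}"
      using x False convex_hull_union_two[of "convex hull ?L" "convex hull ?U"] by auto
    then obtain u v l w where xe: "x = u *\<^sub>R l + v *\<^sub>R w" and uv: "0 \<le> u" "0 \<le> v" "u + v = 1"
      and l: "l \<in> convex hull ?L" and w: "w \<in> convex hull ?U"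
      by blast
    have lV: "l \<in> convex hull V" and wV: "w \<in> convex hull V"
      using l w hull_mono[of ?L V convex] hull_mono[of ?U V convex] by auto
    have xv: "x = (1 - v) *\<^sub>R l + v *\<^sub>R w" using xe uv(3) by (simp add: eq_diff_eq[symmetric])
    have below: "inner a l < k" using L l by auto
    have above: "k \<le> inner a ((1 - v) *\<^sub>R l + v *\<^sub>R w)" using x xv by simp
    obtain t where t: "0 \<le> t" "t \<le> 1"
      and hk: "inner a ((1 - t) *\<^sub>R l + t *\<^sub>R w) = k"
      and seg: "x \<in> closed_segment ((1 - t) *\<^sub>R l + t *\<^sub>R w) w"
      using hyperplane_crossing[OF below above uv(2)] uv xv by auto
    have "(1 - t) *\<^sub>R l + t *\<^sub>R w \<in> convex hull V"
      using t by (intro convexD_alt[OF convex_convex_hull lV wV]) auto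
    then have "(1 - t) *\<^sub>R l + t *\<^sub>R w \<in> convex hull ?U" using slice hk by blast
    then show ?thesis
      using seg w closed_segment_subset[OF _ _ convex_convex_hull] by blast
  qed
qed

lemma hull_split_by_hyperplane:
  fixes V :: "'n::euclidean_space set"
  assumes slice: "convex hull V \<inter> {y. inner a y = k} \<subseteq> convex hull {v\<in>V. inner a v = k}"
  shows "convex hull V = convex hull {v\<in>V. k \<le> inner a v} \<union> convex hull {v\<in>V. inner a v \<le> k}"
    and "convex hull {v\<in>V. k \<le> inner a v} \<inter> convex hull {v\<in>V. inner a v \<le> k}
           face_of convex hull {v\<in>V. k \<le> inner a v}"
    and "convex hull {v\<in>V. k \<le> inner a v} \<inter> convex hull {v\<in>V. inner a v \<le> k}
           face_of convex hull {v\<in>V. inner a v \<le> k}"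
proof -
  let ?U = "{v\<in>V. k \<le> inner a v}" and ?L = "{v\<in>V. inner a v \<le> k}"
  have U: "convex hull ?U \<subseteq> {y. k \<le> inner a y}"
    by (rule hull_minimal) (auto simp: convex_halfspace_ge)
  have L: "convex hull ?L \<subseteq> {y. inner a y \<le> k}"
    by (rule hull_minimal) (auto simp: convex_halfspace_le)
  have UV: "convex hull ?U \<subseteq> convex hull V" by (rule hull_mono) auto
  have LV: "convex hull ?L \<subseteq> convex hull V" by (rule hull_mono) auto
  have section_U: "convex hull V \<inter> {y. inner a y = k} \<subseteq> convex hull ?U"
    by (rule order_trans[OF slice], rule hull_mono, auto)
  have section_L: "convex hull V \<inter> {y. inner a y = k} \<subseteq> convex hull ?L"
    by (rule order_trans[OF slice], rule hull_mono, auto)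
  have upper: "convex hull V \<inter> {y. k \<le> inner a y} \<subseteq> convex hull ?U"
    by (rule upper_half_of_hull[OF section_U])
  have lower: "convex hull V \<inter> {y. inner a y \<le> k} \<subseteq> convex hull ?L"
    using upper_half_of_hull[of V "- a" "- k"] section_L by simp
  show "convex hull V = convex hull ?U \<union> convex hull ?L"
  proof
    show "convex hull V \<subseteq> convex hull ?U \<union> convex hull ?L"
      using upper lower by force
  qed (use UV LV in auto)
  have inter_U: "convex hull ?U \<inter> convex hull ?L = convex hull ?U \<inter> {y. inner a y = k}"
  proof
    show "convex hull ?U \<inter> convex hull ?L \<subseteq> convex hull ?U \<inter> {y. inner a y = k}"
      using U L by (auto intro: order.antisym)
    show "convex hull ?U \<inter> {y. inner a y = k} \<subseteq> convex hull ?U \<inter> convex hull ?L"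
      using UV section_L by auto
  qed
  show "convex hull ?U \<inter> convex hull ?L face_of convex hull ?U"
    unfolding inter_U by (rule face_of_Int_supporting_hyperplane_ge) (use U in auto)
  have inter_L: "convex hull ?U \<inter> convex hull ?L = convex hull ?L \<inter> {y. inner a y = k}"
  proof
    show "convex hull ?U \<inter> convex hull ?L \<subseteq> convex hull ?L \<inter> {y. inner a y = k}"
      using U L by (auto intro: order.antisym)
    show "convex hull ?L \<inter> {y. inner a y = k} \<subseteq> convex hull ?U \<inter> convex hull ?L"
      using LV section_U by auto
  qed
  show "convex hull ?U \<inter> convex hull ?L face_of convex hull ?L"
    unfolding inter_L by (rule face_of_Int_supporting_hyperplane_le) (use L in auto)
qed

lemma incidence_vector_inner: "inner a (incidence_vector B) = (\<Sum>i\<in>B. a $ i)"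
  unfolding inner_vec_def incidence_vector_def
  by (simp add: if_distrib sum.If_cases cong: if_cong)

lemma incidence_vector_inner_card:
  "inner (incidence_vector E) (incidence_vector B) = real (card (B \<inter> E))"
  unfolding incidence_vector_inner by (simp add: incidence_vector_def sum.If_cases Int_commute)

lemma incidence_level_set:
  "{v \<in> incidence_vector ` \<B>. P (inner (incidence_vector E) v)}
     = incidence_vector ` {B \<in> \<B>. P (real (card (B \<inter> E)))}"
  by (auto simp: incidence_vector_inner_card)

(* Cutting off all bases meeting E in more than s < rank(E) elements changes the polytope, since
   some vertex violates  x(E) <= s. *)
lemma level_family_proper:
  assumes M: "matroid_bases \<B>" and s: "s < rank_of \<B> E"
  shows "base_polytope {B \<in> \<B>. card (B \<inter> E) \<le> s} \<noteq> base_polytope \<B>"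
proof
  assume eq: "base_polytope {B \<in> \<B>. card (B \<inter> E) \<le> s} = base_polytope \<B>"
  have "base_polytope {B \<in> \<B>. card (B \<inter> E) \<le> s} \<subseteq> {y. inner (incidence_vector E) y \<le> s}"
    unfolding base_polytope_def
    by (rule hull_minimal) (auto simp: incidence_vector_inner_card convex_halfspace_le)
  moreover obtain B where "B \<in> \<B>" "rank_of \<B> E \<le> card (B \<inter> E)"
    using base_attaining_rank[OF M] .
  moreover have "incidence_vector B \<in> base_polytope \<B>"
    unfolding base_polytope_def using \<open>B \<in> \<B>\<close> by (intro hull_inc imageI)
  ultimately show False using eq s by (force simp: incidence_vector_inner_card)
qed

(* The
   definition is symmetric in the two blocks, so every lemma has a mirrored version. *)
locale good_levels =
  fixes \<B> :: "('a::finite) set set" and E1 E2 :: "'a set" and s k :: nat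
  assumes matroid: "matroid_bases \<B>"
    and disjoint: "E1 \<inter> E2 = {}" and covers: "E1 \<union> E2 = UNIV"
    and levels_sum: "s + k = matroid_rank \<B>"
    and level1: "s < rank_of \<B> E1" and level2: "k < rank_of \<B> E2"
    and union_indep: "\<And>X Y. indep \<B> X \<Longrightarrow> X \<subseteq> E1 \<Longrightarrow> card X \<le> s \<Longrightarrow>
                             indep \<B> Y \<Longrightarrow> Y \<subseteq> E2 \<Longrightarrow> card Y \<le> k \<Longrightarrow> indep \<B> (X \<union> Y)"
begin

lemma swap: "good_levels \<B> E2 E1 k s"
proof
  show "\<And>X Y. indep \<B> X \<Longrightarrow> X \<subseteq> E2 \<Longrightarrow> card X \<le> k \<Longrightarrow>
              indep \<B> Y \<Longrightarrow> Y \<subseteq> E1 \<Longrightarrow> card Y \<le> s \<Longrightarrow> indep \<B> (X \<union> Y)"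
    using union_indep by (metis Un_commute)
qed (use matroid disjoint covers levels_sum level1 level2 in auto)

lemma card_parts:
  assumes "B \<in> \<B>"
  shows "card (B \<inter> E1) + card (B \<inter> E2) = s + k"
proof -
  have "card (B \<inter> E1) + card (B \<inter> E2) = card ((B \<inter> E1) \<union> (B \<inter> E2))"
    using disjoint by (intro card_Un_disjoint[symmetric]) auto
  also have "(B \<inter> E1) \<union> (B \<inter> E2) = B" using covers by auto
  finally show ?thesis using base_card[OF matroid assms] levels_sum by simp
qed

lemma union_is_base:
  assumes X: "indep \<B> X" "X \<subseteq> E1" "card X = s" and Y: "indep \<B> Y" "Y \<subseteq> E2" "card Y = k"
  shows "X \<union> Y \<in> \<B>"
proof (rule indep_full_card_base[OF matroid])
  show "indep \<B> (X \<union> Y)" using union_indep[OF X(1,2) _ Y(1,2)] X(3) Y(3) by simp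
  have "X \<inter> Y = {}" using X(2) Y(2) disjoint by auto
  then show "card (X \<union> Y) = matroid_rank \<B>" using X(3) Y(3) levels_sum by (simp add: card_Un_disjoint)
qed

(* Exchange at the boundary level: if |B1 \<inter> E1| = s and an element of B1 \<inter> E2 is removed,
   it can be replaced from B2 \<inter> E2, by augmentation inside E2 followed by P2. *)
lemma repair_exchange:
  assumes B1: "B1 \<in> \<B>" "card (B1 \<inter> E1) = s" and B2: "B2 \<in> \<B>" "card (B2 \<inter> E1) \<le> s"
    and x: "x \<in> B1 \<inter> E2" "x \<notin> B2"
  obtains y where "y \<in> B2 - B1" "insert y (B1 - {x}) \<in> \<B>"
    "card (insert y (B1 - {x}) \<inter> E1) = s"
proof -
  let ?I = "B1 \<inter> E2 - {x}"
  have k1: "card (B1 \<inter> E2) = k" using card_parts[OF B1(1)] B1(2) by simp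
  have kpos: "0 < k" using k1 x(1) card_gt_0_iff[of "B1 \<inter> E2"] by auto
  have "card ?I < card (B2 \<inter> E2)" using card_parts[OF B2(1)] B2(2) k1 kpos x(1) by simp
  moreover have "indep \<B> ?I" by (rule indep_subset[OF base_indep[OF B1(1)]]) auto
  moreover have "indep \<B> (B2 \<inter> E2)" by (rule indep_subset[OF base_indep[OF B2(1)]]) auto
  ultimately obtain y where y: "y \<in> B2 \<inter> E2 - ?I" "indep \<B> (insert y ?I)"
    using augment[OF matroid] by blast
  have yB1: "y \<notin> B1" using y x by auto
  have "card (insert y ?I) = k" using k1 kpos x(1) y(1) by simp
  moreover have "indep \<B> (B1 \<inter> E1)" by (rule indep_subset[OF base_indep[OF B1(1)]]) auto
  ultimately have "indep \<B> ((B1 \<inter> E1) \<union> insert y ?I)"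
    using union_indep[of "B1 \<inter> E1" "insert y ?I"] y B1(2) by auto
  moreover have "(B1 \<inter> E1) \<union> insert y ?I = insert y (B1 - {x})" using x y covers disjoint by auto
  moreover have "card (insert y (B1 - {x})) = matroid_rank \<B>"
    using card_swap[of x B1 y] x yB1 base_card[OF matroid B1(1)] by simp
  ultimately have "insert y (B1 - {x}) \<in> \<B>" using indep_full_card_base[OF matroid] by simp
  moreover have "insert y (B1 - {x}) \<inter> E1 = B1 \<inter> E1" using x y disjoint by auto
  ultimately show ?thesis using that y yB1 B1(2) by auto
qed

(* The bases meeting E1 in at most s elements are the bases of a matroid: an ordinary exchange
   step can only fail by moving into E1 from the level s, and then the repaired step works. *)
lemma lower_family_matroid: "matroid_bases {B \<in> \<B>. card (B \<inter> E1) \<le> s}"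
  unfolding matroid_bases_def
proof (intro conjI ballI)
  obtain X where "indep \<B> X" "X \<subseteq> E1" "card X = s"
    using indep_of_card[OF matroid less_imp_le[OF level1]] by blast
  moreover obtain Y where "indep \<B> Y" "Y \<subseteq> E2" "card Y = k"
    using indep_of_card[OF matroid less_imp_le[OF level2]] by blast
  ultimately have "X \<union> Y \<in> \<B>" "(X \<union> Y) \<inter> E1 = X"
    using union_is_base disjoint by blast+
  then show "{B \<in> \<B>. card (B \<inter> E1) \<le> s} \<noteq> {}" using \<open>card X = s\<close> by auto
next
  fix B1 B2 x
  assume B1: "B1 \<in> {B \<in> \<B>. card (B \<inter> E1) \<le> s}"
    and B2: "B2 \<in> {B \<in> \<B>. card (B \<inter> E1) \<le> s}"
    and x: "x \<in> B1 - B2"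
  obtain y where y: "y \<in> B2 - B1" "insert y (B1 - {x}) \<in> \<B>"
    using base_exchange[OF matroid _ _ x] B1 B2 by auto
  show "\<exists>y\<in>B2 - B1. insert y (B1 - {x}) \<in> {B \<in> \<B>. card (B \<inter> E1) \<le> s}"
  proof (cases "card (insert y (B1 - {x}) \<inter> E1) \<le> s")
    case True
    then show ?thesis using y by blast
  next
    case False
    have "insert y (B1 - {x}) \<inter> E1 \<subseteq> insert y (B1 \<inter> E1 - {x})" by auto
    then have "card (insert y (B1 - {x}) \<inter> E1) \<le> card (insert y (B1 \<inter> E1 - {x}))"
      by (rule card_mono[rotated]) simp
    then have grow: "card (insert y (B1 - {x}) \<inter> E1) \<le> Suc (card (B1 \<inter> E1 - {x}))"
      by (simp add: card_insert_if split: if_splits)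
    have "x \<notin> E1"
    proof
      assume "x \<in> E1"
      then have "Suc (card (B1 \<inter> E1 - {x})) = card (B1 \<inter> E1)"
        using x by (intro card_Suc_Diff1) auto
      then show False using grow False B1 by simp
    qed
    then have "x \<in> B1 \<inter> E2" "card (B1 \<inter> E1) = s" using x covers grow False B1 by auto
    then obtain y' where "y' \<in> B2 - B1" "insert y' (B1 - {x}) \<in> \<B>"
      "card (insert y' (B1 - {x}) \<inter> E1) = s"
      using repair_exchange[of B1 B2 x] B1 B2 x by auto
    then show ?thesis by auto
  qed
qed

(* Every weight c, tilted by a suitable multiple d of the indicator of E2, is minimised over all
   bases by a base on the level |B \<inter> E2| = k: add the supporting lines on E1 and on E2 and use
   |B \<inter> E1| - s = k - |B \<inter> E2|. *)
lemma level_minimizer: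
  fixes c :: "'a \<Rightarrow> real"
  obtains B0 d where "B0 \<in> \<B>" "card (B0 \<inter> E2) = k"
    "\<And>B. B \<in> \<B> \<Longrightarrow> sum c B0 + d * (real (card (B \<inter> E2)) - real k) \<le> sum c B"
proof -
  obtain X d1 where X: "indep \<B> X" "X \<subseteq> E1" "card X = s"
    and line1: "\<And>Z. indep \<B> Z \<Longrightarrow> Z \<subseteq> E1 \<Longrightarrow> sum c X + d1 * (real (card Z) - real s) \<le> sum c Z"
    using min_weight_supporting_line[OF matroid level1] by blast
  obtain Y d2 where Y: "indep \<B> Y" "Y \<subseteq> E2" "card Y = k"
    and line2: "\<And>Z. indep \<B> Z \<Longrightarrow> Z \<subseteq> E2 \<Longrightarrow> sum c Y + d2 * (real (card Z) - real k) \<le> sum c Z"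
    using min_weight_supporting_line[OF matroid level2] by blast
  have XY: "X \<inter> Y = {}" "(X \<union> Y) \<inter> E2 = Y" using X(2) Y(2) disjoint by auto
  have "sum c (X \<union> Y) + (d2 - d1) * (real (card (B \<inter> E2)) - real k) \<le> sum c B" if B: "B \<in> \<B>" for B
  proof -
    have "indep \<B> (B \<inter> E1)" "indep \<B> (B \<inter> E2)" using indep_subset[OF base_indep[OF B]] by auto
    then have "sum c X + d1 * (real (card (B \<inter> E1)) - real s)
                 + (sum c Y + d2 * (real (card (B \<inter> E2)) - real k))
               \<le> sum c (B \<inter> E1) + sum c (B \<inter> E2)"
      using line1 line2 by (intro add_mono) auto
    moreover have "real (card (B \<inter> E1)) - real s = real k - real (card (B \<inter> E2))"
      using card_parts[OF B] by linarith
    moreover have "sum c (B \<inter> E1) + sum c (B \<inter> E2) = sum c B"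
    proof -
      have "B - E1 = B \<inter> E2" using disjoint covers by auto
      then show ?thesis using sum.Int_Diff[of B c E1] by simp
    qed
    moreover have "sum c (X \<union> Y) = sum c X + sum c Y" using XY(1) by (simp add: sum.union_disjoint)
    ultimately show ?thesis by (simp add: algebra_simps)
  qed
  moreover have "X \<union> Y \<in> \<B>" using union_is_base[OF X Y] .
  ultimately show ?thesis using that[of "X \<union> Y" "d2 - d1"] XY(2) Y(3) by auto
qed

(* The section of P(M) by the hyperplane x(E2) = k is spanned by the bases on that level: a point
   of the section outside that hull could be separated from it by some functional a, and the
   tilted functional given by the previous lemma contradicts this separation. *)
lemma level_slice:
  "base_polytope \<B> \<inter> {y. inner (incidence_vector E2) y = real k}
     \<subseteq> convex hull (incidence_vector ` {B \<in> \<B>. card (B \<inter> E2) = k})"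
proof
  let ?T = "convex hull (incidence_vector ` {B \<in> \<B>. card (B \<inter> E2) = k})"
  let ?e = "incidence_vector E2"
  fix x assume x: "x \<in> base_polytope \<B> \<inter> {y. inner ?e y = real k}"
  show "x \<in> ?T"
  proof (rule ccontr)
    assume "x \<notin> ?T"
    moreover have "closed ?T"
      by (intro compact_imp_closed compact_convex_hull finite_imp_compact finite_imageI) simp
    ultimately obtain a b where sep: "inner a x < b" "\<And>y. y \<in> ?T \<Longrightarrow> b < inner a y"
      using separating_hyperplane_closed_point[OF convex_convex_hull] by blast
    obtain B0 d where B0: "B0 \<in> \<B>" "card (B0 \<inter> E2) = k"
      and min: "\<And>B. B \<in> \<B> \<Longrightarrow>
                  (\<Sum>i\<in>B0. a $ i) + d * (real (card (B \<inter> E2)) - real k) \<le> (\<Sum>i\<in>B. a $ i)"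
      using level_minimizer[of "\<lambda>i. a $ i"] by blast
    let ?m = "inner a (incidence_vector B0) - d * real k"
    have "incidence_vector ` \<B> \<subseteq> {y. ?m \<le> inner (a - d *\<^sub>R ?e) y}"
      using min by (auto simp: inner_diff_left incidence_vector_inner_card incidence_vector_inner[of a]
          algebra_simps)
    then have "base_polytope \<B> \<subseteq> {y. ?m \<le> inner (a - d *\<^sub>R ?e) y}"
      unfolding base_polytope_def by (rule hull_minimal) (rule convex_halfspace_ge)
    then have "inner a (incidence_vector B0) \<le> inner a x"
      using x by (auto simp: inner_diff_left)
    moreover have "incidence_vector B0 \<in> ?T" using B0 by (intro hull_inc imageI) simp
    ultimately show False using sep by fastforce
  qed
qed

end

lemma good_partition_levels:
  assumes "matroid_bases \<B>" and "good_partition \<B> E1 E2 a1 a2"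
  shows "good_levels \<B> E1 E2 (rank_of \<B> E1 - a1) (rank_of \<B> E2 - a2)"
  using assms unfolding good_partition_def by unfold_locales auto

theorem theorem1:
  fixes \<B> :: "('a::finite) set set" and E1 E2 :: "'a set" and a1 a2 :: nat
  assumes "matroid_bases \<B>"
    and "good_partition \<B> E1 E2 a1 a2"
  shows "nontrivial_hyperplane_split \<B>
           {B \<in> \<B>. card (B \<inter> E1) \<le> rank_of \<B> E1 - a1}
           {B \<in> \<B>. card (B \<inter> E2) \<le> rank_of \<B> E2 - a2}"
proof -
  define s k where "s = rank_of \<B> E1 - a1" and "k = rank_of \<B> E2 - a2"
  interpret good_levels \<B> E1 E2 s k
    unfolding s_def k_def by (rule good_partition_levels[OF assms])
  interpret swapped: good_levels \<B> E2 E1 k s by (rule swap)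
  let ?V = "incidence_vector ` \<B>" and ?e = "incidence_vector E2"
  have upper: "{v \<in> ?V. real k \<le> inner ?e v} = incidence_vector ` {B \<in> \<B>. card (B \<inter> E1) \<le> s}"
    unfolding incidence_level_set[where P = "\<lambda>z. real k \<le> z"] using card_parts
    by (intro arg_cong[where f = "image _"]) force
  have lower: "{v \<in> ?V. inner ?e v \<le> real k} = incidence_vector ` {B \<in> \<B>. card (B \<inter> E2) \<le> k}"
    unfolding incidence_level_set[where P = "\<lambda>z. z \<le> real k"] by simp
  have "convex hull ?V \<inter> {y. inner ?e y = real k} \<subseteq> convex hull {v \<in> ?V. inner ?e v = real k}"
    using level_slice unfolding incidence_level_set[where P = "\<lambda>z. z = real k"] base_polytope_def
    by simp
  note split = hull_split_by_hyperplane[OF this, unfolded upper lower, folded base_polytope_def]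
  show ?thesis
    unfolding nontrivial_hyperplane_split_def hyperplane_split_def s_def[symmetric] k_def[symmetric]
    using lower_family_matroid swapped.lower_family_matroid split
      level_family_proper[OF assms(1) level1] level_family_proper[OF assms(1) level2] by simp
qed

end
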